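(* Let $P$ be a finite $(3+1)$-free poset. For every $P$-tableau $T$ (of any partition shape), $\mathbf u_{\mathrm{colword}(T)}\equiv\mathbf u_{\mathrm{diagword}(T)}\pmod{I^P_{\mathrm{plac}}}$.
   Context: $a<_Pb$: strict order; $a\sim_Pb$: incomparable or equal. $\mathcal{U}_P=\mathbb{Z}\langle u_a:a\in P\rangle$, $\mathbf u_w=u_{w_1}\cdots u_{w_m}$. $I^P_{\mathrm{plac}}$ is generated by $u_bu_au_c-u_bu_cu_a$ ($a<_Pb$, $c\not<_Pb$, $a<_Pc$), $u_cu_au_b-u_au_cu_b$ ($b\not<_Pa$, $b<_Pc$, $a<_Pc$), $u_cu_au_b-u_bu_cu_a$ ($a\sim_Pb$, $b\sim_Pc$, $a<_Pc$). A $P$-tableau is a filling $T$ of a Young diagram (English notation) with $T(1,c)<_PT(2,c)<_P\cdots$ down each column and $T(r,c+1)\not<_PT(r,c)$ along each row. $\mathrm{colword}(T)$ reads each column bottom to top, columns left to right. $\mathrm{diagword}(T)$ reads each diagonal $\{(r,c):c-r=\text{const}\}$ in order of increasing $r$, concatenating diagonals in order of increasing $c-r$. *)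

theory Defs
  imports Main
begin

text \<open>The finite poset P is modelled as a finite type with a partial order;
  a <_P b is the strict order <, and a ~_P b means incomparable or equal.\<close>

definition sim :: "'a::order \<Rightarrow> 'a \<Rightarrow> bool" where
  "sim a b \<longleftrightarrow> \<not> a < b \<and> \<not> b < a"

definition three_plus_one_free :: "'a::order itself \<Rightarrow> bool" where
  "three_plus_one_free _ \<longleftrightarrow>
     \<not> (\<exists>a b c d :: 'a. a < b \<and> b < c \<and> sim a d \<and> sim b d \<and> sim c d)"

text \<open>Elements of the free associative ring Z<u_a : a in P> are represented by their
  coefficient functions on words (lists); u_w is the indicator of the word w.\<close>

definition mono :: "'a list \<Rightarrow> ('a list \<Rightarrow> int)" where
  "mono w = (\<lambda>x. if x = w then 1 else 0)"

definition fmul :: "('a list \<Rightarrow> int) \<Rightarrow> ('a list \<Rightarrow> int) \<Rightarrow> ('a list \<Rightarrow> int)" where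
  "fmul f g = (\<lambda>x. \<Sum>i\<le>length x. f (take i x) * g (drop i x))"

inductive_set plac_ideal :: "('a::order list \<Rightarrow> int) set" where
  gen1: "\<lbrakk>a < b; \<not> c < b; a < c\<rbrakk> \<Longrightarrow>
           (\<lambda>x. mono [b,a,c] x - mono [b,c,a] x) \<in> plac_ideal"
| gen2: "\<lbrakk>\<not> b < a; b < c; a < c\<rbrakk> \<Longrightarrow>
           (\<lambda>x. mono [c,a,b] x - mono [a,c,b] x) \<in> plac_ideal"
| gen3: "\<lbrakk>sim a b; sim b c; a < c\<rbrakk> \<Longrightarrow>
           (\<lambda>x. mono [c,a,b] x - mono [b,c,a] x) \<in> plac_ideal"
| zero: "(\<lambda>x. 0) \<in> plac_ideal"
| add: "\<lbrakk>f \<in> plac_ideal; g \<in> plac_ideal\<rbrakk> \<Longrightarrow> (\<lambda>x. f x + g x) \<in> plac_ideal"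
| neg: "f \<in> plac_ideal \<Longrightarrow> (\<lambda>x. - f x) \<in> plac_ideal"
| lmul: "f \<in> plac_ideal \<Longrightarrow> fmul (mono v) f \<in> plac_ideal"
| rmul: "f \<in> plac_ideal \<Longrightarrow> fmul f (mono v) \<in> plac_ideal"

definition plac_cong :: "'a::order list \<Rightarrow> 'a list \<Rightarrow> bool" where
  "plac_cong v w \<longleftrightarrow> (\<lambda>x. mono v x - mono w x) \<in> plac_ideal"

text \<open>Partitions as weakly decreasing lists of positive parts; rows and columns 1-based.\<close>
definition is_partition :: "nat list \<Rightarrow> bool" where
  "is_partition lam \<longleftrightarrow> sorted (rev lam) \<and> 0 \<notin> set lam"

definition in_shape :: "nat list \<Rightarrow> nat \<Rightarrow> nat \<Rightarrow> bool" where
  "in_shape lam r c \<longleftrightarrow> 1 \<le> r \<and> r \<le> length lam \<and> 1 \<le> c \<and> c \<le> lam ! (r - 1)"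

definition num_cols :: "nat list \<Rightarrow> nat" where
  "num_cols lam = (if lam = [] then 0 else hd lam)"

definition col_len :: "nat list \<Rightarrow> nat \<Rightarrow> nat" where
  "col_len lam c = card {r. in_shape lam r c}"

definition is_P_tableau :: "nat list \<Rightarrow> (nat \<Rightarrow> nat \<Rightarrow> 'a::order) \<Rightarrow> bool" where
  "is_P_tableau lam T \<longleftrightarrow> is_partition lam \<and>
     (\<forall>r c. in_shape lam r c \<and> in_shape lam (r+1) c \<longrightarrow> T r c < T (r+1) c) \<and>
     (\<forall>r c. in_shape lam r c \<and> in_shape lam r (c+1) \<longrightarrow> \<not> T r (c+1) < T r c)"

definition colword :: "nat list \<Rightarrow> (nat \<Rightarrow> nat \<Rightarrow> 'a) \<Rightarrow> 'a list" where
  "colword lam T = concat (map (\<lambda>c. map (\<lambda>r. T r c) (rev [1..<col_len lam c + 1]))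
                               [1..<num_cols lam + 1])"

text \<open>Diagonal word: diagonals c - r = d by increasing d, each read by increasing r.\<close>
definition diagword :: "nat list \<Rightarrow> (nat \<Rightarrow> nat \<Rightarrow> 'a) \<Rightarrow> 'a list" where
  "diagword lam T = concat (map (\<lambda>d.
      map (\<lambda>r. T r (nat (int r + d)))
          (filter (\<lambda>r. int r + d \<ge> 1 \<and> in_shape lam r (nat (int r + d))) [1..<length lam + 1]))
      [1 - int (length lam) .. int (num_cols lam) - 1])"

end

theory Submission
  imports Defs
begin

text \<open>Induct over the columns from the right. Writing \<open>colword\<^sub>c\<close> and \<open>diagword\<^sub>c\<close>
  for the words of the part of \<open>T\<close> in columns \<open>\<ge> c\<close>, we have
  \<open>colword\<^sub>c = column\<^sub>c \<cdot> colword\<^sub>c\<^sub>+\<^sub>1\<close>, so it suffices to show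
  \<open>column\<^sub>c \<cdot> diagword\<^sub>c\<^sub>+\<^sub>1 \<equiv> diagword\<^sub>c\<close>: the strictly decreasing column word must be
  distributed, one letter per diagonal, into the diagonals of \<open>diagword\<^sub>c\<^sub>+\<^sub>1\<close>.
  Every elementary move carries a letter \<open>y\<close> leftwards past a letter \<open>x\<close> with \<open>x < y\<close>,
  directly behind a letter \<open>b\<close> with \<open>x < b\<close> and \<open>\<not> y < b\<close>, i.e. it is an instance of the
  first placactic relation \<open>u\<^sub>b u\<^sub>a u\<^sub>c \<equiv> u\<^sub>b u\<^sub>c u\<^sub>a\<close>. The required comparabilities come
  from the key consequence of (3+1)-freeness: the entry in cell \<open>(j, c)\<close> is below the entry
  in every cell \<open>(r, c')\<close> with \<open>0 \<le> c' - c < r - j\<close>.\<close>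

section \<open>The placactic congruence\<close>

lemma plac_cong_refl: "plac_cong v v"
  unfolding plac_cong_def using plac_ideal.zero by simp

lemma plac_cong_trans: "plac_cong u v \<Longrightarrow> plac_cong v w \<Longrightarrow> plac_cong u w"
  unfolding plac_cong_def by (drule (1) plac_ideal.add) simp

lemma fmul_mono_left:
  "fmul (Defs.mono p) f x =
     (if length p \<le> length x \<and> take (length p) x = p then f (drop (length p) x) else 0)"
proof -
  have "fmul (Defs.mono p) f x =
      (\<Sum>i\<le>length x. if i = length p
         then (if take (length p) x = p then f (drop (length p) x) else 0) else 0)"
    unfolding fmul_def
  proof (rule sum.cong)
    fix i assume "i \<in> {..length x}"
    then have "i \<noteq> length p \<Longrightarrow> take i x \<noteq> p" by auto
    then show "Defs.mono p (take i x) * f (drop i x) =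
        (if i = length p then (if take (length p) x = p then f (drop (length p) x) else 0) else 0)"
      by (auto simp: Defs.mono_def)
  qed simp
  then show ?thesis by (simp add: sum.delta)
qed

lemma fmul_mono_right:
  "fmul f (Defs.mono q) x =
     (if length q \<le> length x \<and> drop (length x - length q) x = q
      then f (take (length x - length q) x) else 0)"
proof -
  have "fmul f (Defs.mono q) x =
      (\<Sum>i\<le>length x. if i = length x - length q
         then (if length q \<le> length x \<and> drop (length x - length q) x = q
               then f (take (length x - length q) x) else 0) else 0)"
    unfolding fmul_def
  proof (rule sum.cong)
    fix i assume "i \<in> {..length x}"
    then have "i \<noteq> length x - length q \<or> \<not> length q \<le> length x \<Longrightarrow> drop i x \<noteq> q" by auto
    then show "f (take i x) * Defs.mono q (drop i x) =
        (if i = length x - length q then (if length q \<le> length x \<and> drop (length x - length q) x = q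
           then f (take (length x - length q) x) else 0) else 0)"
      by (auto simp: Defs.mono_def)
  qed simp
  then show ?thesis by (simp add: sum.delta)
qed

lemma plac_cong_append_left: "plac_cong v w \<Longrightarrow> plac_cong (p @ v) (p @ w)"
  unfolding plac_cong_def
proof -
  assume "(\<lambda>x. Defs.mono v x - Defs.mono w x) \<in> plac_ideal"
  then have "fmul (Defs.mono p) (\<lambda>x. Defs.mono v x - Defs.mono w x) \<in> plac_ideal"
    by (rule plac_ideal.lmul)
  moreover have "fmul (Defs.mono p) (\<lambda>x. Defs.mono v x - Defs.mono w x) =
      (\<lambda>x. Defs.mono (p @ v) x - Defs.mono (p @ w) x)"
  proof
    fix x :: "'a list"
    show "fmul (Defs.mono p) (\<lambda>x. Defs.mono v x - Defs.mono w x) x =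
        Defs.mono (p @ v) x - Defs.mono (p @ w) x"
    proof (cases "length p \<le> length x \<and> take (length p) x = p")
      case True
      then obtain u where x: "x = p @ u" by (metis append_take_drop_id)
      show ?thesis unfolding x fmul_mono_left by (simp add: Defs.mono_def)
    next
      case False
      then have "x \<noteq> p @ v" "x \<noteq> p @ w" by auto
      with False show ?thesis unfolding fmul_mono_left by (simp add: Defs.mono_def)
    qed
  qed
  ultimately show "(\<lambda>x. Defs.mono (p @ v) x - Defs.mono (p @ w) x) \<in> plac_ideal" by simp
qed

lemma plac_cong_append_right: "plac_cong v w \<Longrightarrow> plac_cong (v @ q) (w @ q)"
  unfolding plac_cong_def
proof -
  assume "(\<lambda>x. Defs.mono v x - Defs.mono w x) \<in> plac_ideal"
  then have "fmul (\<lambda>x. Defs.mono v x - Defs.mono w x) (Defs.mono q) \<in> plac_ideal"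
    by (rule plac_ideal.rmul)
  moreover have "fmul (\<lambda>x. Defs.mono v x - Defs.mono w x) (Defs.mono q) =
      (\<lambda>x. Defs.mono (v @ q) x - Defs.mono (w @ q) x)"
  proof
    fix x :: "'a list"
    show "fmul (\<lambda>x. Defs.mono v x - Defs.mono w x) (Defs.mono q) x =
        Defs.mono (v @ q) x - Defs.mono (w @ q) x"
    proof (cases "length q \<le> length x \<and> drop (length x - length q) x = q")
      case True
      then obtain u where x: "x = u @ q" by (metis append_take_drop_id)
      show ?thesis unfolding x fmul_mono_right by (simp add: Defs.mono_def)
    next
      case False
      then have "x \<noteq> v @ q" "x \<noteq> w @ q" by auto
      with False show ?thesis unfolding fmul_mono_right by (simp add: Defs.mono_def)
    qed
  qed
  ultimately show "(\<lambda>x. Defs.mono (v @ q) x - Defs.mono (w @ q) x) \<in> plac_ideal" by simp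
qed

lemma plac_cong_in_context: "plac_cong v w \<Longrightarrow> plac_cong (p @ v @ q) (p @ w @ q)"
  by (intro plac_cong_append_left plac_cong_append_right)

lemma plac_cong_bac_bca: "a < b \<Longrightarrow> \<not> c < b \<Longrightarrow> a < c \<Longrightarrow> plac_cong [b, a, c] [b, c, a]"
  unfolding plac_cong_def by (rule plac_ideal.gen1)

section \<open>Rearranging words by the first placactic relation\<close>

lemma plac_cong_move_past_chain:
  fixes b y :: "'a::order"
  assumes "sorted_wrt (\<lambda>a b. b < a) (b # xs)" "\<forall>x\<in>set xs. x < y" "\<not> y < b"
  shows "plac_cong (b # xs @ [y]) (b # y # xs)"
  using assms
proof (induction xs rule: rev_induct)
  case Nil
  then show ?case by (simp add: plac_cong_refl)
next
  case (snoc x xs)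
  obtain pre where pre: "b # xs = pre @ [last (b # xs)]"
    by (metis append_butlast_last_id list.distinct(1))
  have last_in: "last (b # xs) = b \<or> last (b # xs) \<in> set xs"
    by (metis last.simps last_in_set list.distinct(1) set_ConsD)
  have "x < last (b # xs)" "\<not> y < last (b # xs)" "x < y"
    using snoc.prems last_in by (auto simp: sorted_wrt_append dest: less_not_sym)
  then have "plac_cong (pre @ [last (b # xs), x, y] @ []) (pre @ [last (b # xs), y, x] @ [])"
    by (intro plac_cong_in_context plac_cong_bac_bca)
  then have "plac_cong (b # (xs @ [x]) @ [y]) ((b # xs @ [y]) @ [x])"
    by (metis pre append.assoc append_Cons append_Nil)
  moreover have "plac_cong ((b # xs @ [y]) @ [x]) ((b # y # xs) @ [x])"
    using snoc.IH snoc.prems by (intro plac_cong_append_right) (simp add: sorted_wrt_append)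
  ultimately show ?case by (simp add: plac_cong_trans)
qed

lemma plac_cong_commute_chains:
  fixes b :: "'a::order"
  assumes "sorted_wrt (\<lambda>a b. b < a) (b # xs)" "\<forall>x\<in>set xs. \<forall>y\<in>set ys. x < y"
    and "sorted_wrt (\<lambda>a b. \<not> b < a) (b # ys)"
  shows "plac_cong (b # xs @ ys) (b # ys @ xs)"
  using assms
proof (induction ys arbitrary: b)
  case Nil
  then show ?case by (simp add: plac_cong_refl)
next
  case (Cons y ys)
  have "plac_cong ((b # xs @ [y]) @ ys) ((b # y # xs) @ ys)"
    using Cons.prems by (intro plac_cong_append_right plac_cong_move_past_chain) auto
  moreover have "plac_cong ([b] @ y # xs @ ys) ([b] @ y # ys @ xs)"
    using Cons.prems by (intro plac_cong_append_left Cons.IH) auto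
  ultimately show ?case by (simp add: plac_cong_trans)
qed

text \<open>Each letter \<open>e d\<close> in turn carries the block \<open>D d\<close> leftwards past the later letters
  \<open>e d'\<close>, all of which lie below every letter of \<open>D d\<close>.\<close>

lemma plac_cong_interleave:
  fixes ds :: "'i::order list" and e D :: "'i \<Rightarrow> 'a::order list"
  assumes "sorted_wrt (<) ds"
    and "sorted_wrt (\<lambda>a b. b < a) (concat (map e ds))"
    and "\<forall>d\<in>set ds. length (e d) \<le> 1"
    and "\<forall>d\<in>set ds. \<forall>d'\<in>set ds. d < d' \<longrightarrow> D d \<noteq> [] \<longrightarrow> e d' \<noteq> [] \<longrightarrow> e d \<noteq> []"
    and "\<forall>d\<in>set ds. \<forall>d'\<in>set ds. d < d' \<longrightarrow> (\<forall>x\<in>set (e d'). \<forall>y\<in>set (D d). x < y)"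
    and "\<forall>d\<in>set ds. sorted_wrt (\<lambda>a b. \<not> b < a) (e d @ D d)"
  shows "plac_cong (concat (map e ds) @ concat (map D ds)) (concat (map (\<lambda>d. e d @ D d) ds))"
  using assms
proof (induction ds)
  case Nil
  then show ?case by (simp add: plac_cong_refl)
next
  case (Cons d ds)
  define E' where "E' = concat (map e ds)"
  define D' where "D' = concat (map D ds)"
  have IH: "plac_cong (p @ E' @ D') (p @ concat (map (\<lambda>d. e d @ D d) ds))" for p
    unfolding E'_def D'_def
    by (intro plac_cong_append_left Cons.IH) (use Cons.prems in \<open>auto simp: sorted_wrt_append\<close>)
  show ?case
  proof (cases "D d = [] \<or> E' = []")
    case True
    then show ?thesis
    proof
      assume "D d = []"
      then show ?thesis using IH[of "e d"] unfolding E'_def D'_def by simp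
    next
      assume E: "E' = []"
      then have e_ds: "concat (map e (d # ds)) = e d" unfolding E'_def by simp
      show ?thesis unfolding e_ds using IH[of "e d @ D d"] unfolding E D'_def by simp
    qed
  next
    case False
    then obtain d' where d': "d' \<in> set ds" "e d' \<noteq> []" unfolding E'_def by auto
    with Cons.prems(1,4) False have "e d \<noteq> []" by auto
    with Cons.prems(3) obtain b where b: "e d = [b]"
      by (cases "e d") auto
    have "plac_cong (b # E' @ D d) (b # D d @ E')"
      using Cons.prems b unfolding E'_def by (intro plac_cong_commute_chains) auto
    then have "plac_cong ((b # E' @ D d) @ D') ((b # D d @ E') @ D')"
      by (rule plac_cong_append_right)
    moreover have "plac_cong ((b # D d) @ E' @ D') ((b # D d) @ concat (map (\<lambda>d. e d @ D d) ds))"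
      by (rule IH)
    ultimately show ?thesis
      using b unfolding E'_def D'_def by (simp add: plac_cong_trans)
  qed
qed

section \<open>Young diagrams and \<open>P\<close>-tableaux\<close>

lemma partition_nth_antimono:
  assumes "is_partition lam" "i \<le> j" "j < length lam"
  shows "lam ! j \<le> lam ! i"
  using assms sorted_rev_nth_mono unfolding is_partition_def by blast

lemma in_shape_row_le:
  assumes "is_partition lam" "in_shape lam r c" "1 \<le> r'" "r' \<le> r"
  shows "in_shape lam r' c"
proof -
  have "lam ! (r - 1) \<le> lam ! (r' - 1)"
    using assms partition_nth_antimono[OF assms(1), of "r' - 1" "r - 1"]
    unfolding in_shape_def by auto
  then show ?thesis using assms unfolding in_shape_def by auto
qed

lemma in_shape_col_le:
  assumes "in_shape lam r c" "1 \<le> c'" "c' \<le> c"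
  shows "in_shape lam r c'"
  using assms unfolding in_shape_def by auto

lemma in_shape_le_num_cols:
  assumes "is_partition lam" "in_shape lam r c"
  shows "c \<le> num_cols lam"
proof -
  have "lam \<noteq> []" using assms(2) unfolding in_shape_def by auto
  then have "num_cols lam = lam ! 0" unfolding num_cols_def by (simp add: hd_conv_nth)
  moreover have "lam ! (r - 1) \<le> lam ! 0"
    using assms partition_nth_antimono[OF assms(1), of 0 "r - 1"] unfolding in_shape_def by auto
  ultimately show ?thesis using assms unfolding in_shape_def by auto
qed

lemma in_shape_first_row:
  assumes "1 \<le> c" "c \<le> num_cols lam"
  shows "in_shape lam 1 c"
proof -
  have "lam \<noteq> []" using assms unfolding num_cols_def by (auto split: if_splits)
  then show ?thesis using assms unfolding in_shape_def num_cols_def by (cases lam) auto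
qed

lemma in_shape_iff_col_len:
  assumes "is_partition lam"
  shows "in_shape lam r c \<longleftrightarrow> 1 \<le> r \<and> r \<le> col_len lam c"
proof -
  define S where "S = {r. in_shape lam r c}"
  have "finite S" unfolding S_def in_shape_def
    by (rule finite_subset[of _ "{..length lam}"]) auto
  have S_eq: "S = {1..card S}"
  proof (cases "S = {}")
    case False
    define m where "m = Max S"
    have "m \<in> S" using \<open>finite S\<close> False unfolding m_def by simp
    have "S \<subseteq> {1..m}" using \<open>finite S\<close> unfolding m_def by (auto simp: S_def in_shape_def)
    moreover have "{1..m} \<subseteq> S"
      using \<open>m \<in> S\<close> in_shape_row_le[OF assms] unfolding S_def by auto
    ultimately have "S = {1..m}" by blast
    then show ?thesis by simp
  qed simp
  have "r \<in> S \<longleftrightarrow> 1 \<le> r \<and> r \<le> card S" by (subst S_eq) simp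
  then show ?thesis unfolding col_len_def S_def by simp
qed

lemma P_tableau_partition: "is_P_tableau lam T \<Longrightarrow> is_partition lam"
  unfolding is_P_tableau_def by simp

lemma P_tableau_column_less:
  assumes "is_P_tableau lam T" "in_shape lam r c" "1 \<le> j" "j < r"
  shows "T j c < T r c"
  using assms(2-4)
proof (induction r)
  case (Suc r)
  have "in_shape lam r c"
    using in_shape_row_le[OF P_tableau_partition[OF assms(1)] Suc.prems(1)] Suc.prems by auto
  then have "T r c < T (Suc r) c"
    using assms(1) Suc.prems(1) unfolding is_P_tableau_def by (metis Suc_eq_plus1)
  moreover have "j < r \<Longrightarrow> T j c < T r c"
    using Suc.IH \<open>in_shape lam r c\<close> Suc.prems(2) by blast
  ultimately show ?case using Suc.prems(3) by (cases "j = r") auto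
qed simp

lemma P_tableau_row_not_less:
  assumes "is_P_tableau lam T" "in_shape lam r c" "2 \<le> c"
  shows "\<not> T r c < T r (c - 1)"
proof -
  have "in_shape lam r (c - 1)" "c - 1 + 1 = c"
    using in_shape_col_le[OF assms(2)] assms(3) by auto
  then show ?thesis using assms(1,2) unfolding is_P_tableau_def by metis
qed

text \<open>This is where (3+1)-freeness enters: if the entry \<open>x\<close> in cell \<open>(j, c)\<close> were not below
  the entry \<open>y\<close> in cell \<open>(r, c + k + 1)\<close>, then by induction \<open>x < T (r-1) (c+k) < T r (c+k)\<close>
  would be a chain of three elements all incomparable with \<open>y\<close>.\<close>

lemma P_tableau_less_shifted:
  fixes T :: "nat \<Rightarrow> nat \<Rightarrow> 'a::order"
  assumes tab: "is_P_tableau lam T" and free: "three_plus_one_free TYPE('a)"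
    and "in_shape lam r c'" "1 \<le> j" "1 \<le> c" "c \<le> c'" "j + (c' - c) < r"
  shows "T j c < T r c'"
proof -
  have "T j c < T r (c + k)" if "in_shape lam r (c + k)" "j + k < r" for k r
    using that
  proof (induction k arbitrary: r)
    case 0
    then show ?case using P_tableau_column_less[OF tab] \<open>1 \<le> j\<close> by simp
  next
    case (Suc k r)
    have p: "is_partition lam" using P_tableau_partition[OF tab] .
    have left: "in_shape lam r (c + k)" using in_shape_col_le[OF Suc.prems(1)] \<open>1 \<le> c\<close> by simp
    have up_left: "in_shape lam (r - 1) (c + k)" using in_shape_row_le[OF p left] Suc.prems by simp
    have x_below: "T j c < T (r - 1) (c + k)" using Suc.IH[OF up_left] Suc.prems by simp
    have "r - 1 + 1 = r" using Suc.prems(2) by simp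
    then have col: "T (r - 1) (c + k) < T r (c + k)"
      using tab left up_left unfolding is_P_tableau_def by metis
    have row: "\<not> T r (c + Suc k) < T r (c + k)"
      using P_tableau_row_not_less[OF tab Suc.prems(1)] \<open>1 \<le> c\<close> by simp
    show ?case
    proof (rule ccontr)
      assume "\<not> T j c < T r (c + Suc k)"
      then have "sim (T j c) (T r (c + Suc k))" "sim (T (r - 1) (c + k)) (T r (c + Suc k))"
        "sim (T r (c + k)) (T r (c + Suc k))"
        unfolding sim_def using row x_below col by (meson less_trans)+
      then show False using free x_below col unfolding three_plus_one_free_def by blast
    qed
  qed
  from this[of r "c' - c"] show ?thesis using assms by simp
qed

section \<open>Reading the tableau from a given column on\<close>

definition column :: "nat list \<Rightarrow> (nat \<Rightarrow> nat \<Rightarrow> 'a) \<Rightarrow> nat \<Rightarrow> 'a list" where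
  "column lam T c = map (\<lambda>r. T r c) (rev [1..<col_len lam c + 1])"

definition colword_from :: "nat list \<Rightarrow> (nat \<Rightarrow> nat \<Rightarrow> 'a) \<Rightarrow> nat \<Rightarrow> 'a list" where
  "colword_from lam T c0 = concat (map (column lam T) [c0..<num_cols lam + 1])"

definition diagonals :: "nat list \<Rightarrow> int list" where
  "diagonals lam = [1 - int (length lam) .. int (num_cols lam) - 1]"

definition diagonal_from :: "nat list \<Rightarrow> (nat \<Rightarrow> nat \<Rightarrow> 'a) \<Rightarrow> nat \<Rightarrow> int \<Rightarrow> 'a list" where
  "diagonal_from lam T c0 d = map (\<lambda>r. T r (nat (int r + d)))
      (filter (\<lambda>r. int r + d \<ge> int c0 \<and> in_shape lam r (nat (int r + d))) [1..<length lam + 1])"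

definition diagword_from :: "nat list \<Rightarrow> (nat \<Rightarrow> nat \<Rightarrow> 'a) \<Rightarrow> nat \<Rightarrow> 'a list" where
  "diagword_from lam T c0 = concat (map (diagonal_from lam T c0) (diagonals lam))"

definition diagonal_cell :: "nat list \<Rightarrow> (nat \<Rightarrow> nat \<Rightarrow> 'a) \<Rightarrow> nat \<Rightarrow> int \<Rightarrow> 'a list" where
  "diagonal_cell lam T c d =
     (if 1 \<le> int c - d \<and> in_shape lam (nat (int c - d)) c then [T (nat (int c - d)) c] else [])"

lemma colword_eq_colword_from: "colword lam T = colword_from lam T 1"
  unfolding colword_def colword_from_def column_def by simp

lemma diagword_eq_diagword_from: "diagword lam T = diagword_from lam T 1"
  unfolding diagword_def diagword_from_def diagonal_from_def diagonals_def by simp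

lemma colword_from_Suc:
  assumes "1 \<le> c0" "c0 \<le> num_cols lam"
  shows "colword_from lam T c0 = column lam T c0 @ colword_from lam T (Suc c0)"
proof -
  have "[c0..<num_cols lam + 1] = c0 # [Suc c0..<num_cols lam + 1]"
    using assms by (simp add: upt_conv_Cons)
  then show ?thesis unfolding colword_from_def by simp
qed

lemma colword_from_beyond: "colword_from lam T (Suc (num_cols lam)) = []"
  unfolding colword_from_def by simp

lemma diagword_from_beyond:
  assumes "is_partition lam"
  shows "diagword_from lam T (Suc (num_cols lam)) = []"
proof -
  have "diagonal_from lam T (Suc (num_cols lam)) d = []" for d
    using in_shape_le_num_cols[OF assms] unfolding diagonal_from_def
    by (fastforce simp: filter_empty_conv)
  then show ?thesis unfolding diagword_from_def by simp
qed

lemma diagonal_from_Suc: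
  "diagonal_from lam T c0 d = diagonal_cell lam T c0 d @ diagonal_from lam T (Suc c0) d"
proof -
  define N where "N = length lam + 1"
  define Q0 where "Q0 = (\<lambda>r. int r + d \<ge> int c0 \<and> in_shape lam r (nat (int r + d)))"
  define Q1 where "Q1 = (\<lambda>r. int r + d \<ge> int (Suc c0) \<and> in_shape lam r (nat (int r + d)))"
  define f where "f = (\<lambda>r. T r (nat (int r + d)))"
  have from0: "diagonal_from lam T c0 d = map f (filter Q0 [1..<N])"
    and from1: "diagonal_from lam T (Suc c0) d = map f (filter Q1 [1..<N])"
    unfolding diagonal_from_def N_def Q0_def Q1_def f_def by simp_all
  show ?thesis
  proof (cases "int c0 - d < 1")
    case True
    then have "diagonal_cell lam T c0 d = []" unfolding diagonal_cell_def by simp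
    moreover have "filter Q0 [1..<N] = filter Q1 [1..<N]"
      using True by (intro filter_cong) (auto simp: Q0_def Q1_def)
    ultimately show ?thesis unfolding from0 from1 by simp
  next
    case False
    define r0 where "r0 = nat (int c0 - d)"
    have r0: "int r0 = int c0 - d" "1 \<le> r0" using False unfolding r0_def by auto
    show ?thesis
    proof (cases "r0 < N")
      case False
      then have "diagonal_cell lam T c0 d = []"
        unfolding diagonal_cell_def N_def r0_def by (auto simp: in_shape_def)
      moreover have "filter Q0 [1..<N] = []" "filter Q1 [1..<N] = []"
        using False r0 by (auto simp: Q0_def Q1_def filter_empty_conv)
      ultimately show ?thesis unfolding from0 from1 by simp
    next
      case True
      have "[1..<N] = [1..<r0] @ r0 # [Suc r0..<N]"
        using True r0(2) by (metis le_add_diff_inverse less_imp_le_nat upt_add_eq_append upt_conv_Cons)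
      moreover have "filter Q0 [1..<r0] = []" "filter Q1 [1..<r0] = []"
        using r0 by (auto simp: Q0_def Q1_def filter_empty_conv)
      moreover have "filter Q0 [Suc r0..<N] = filter Q1 [Suc r0..<N]"
        using r0 by (intro filter_cong) (auto simp: Q0_def Q1_def)
      moreover have "Q0 r0 = in_shape lam r0 c0" "\<not> Q1 r0"
        using r0 by (auto simp: Q0_def Q1_def)
      moreover have "diagonal_cell lam T c0 d = (if in_shape lam r0 c0 then [f r0] else [])"
        unfolding diagonal_cell_def f_def using r0 r0_def by auto
      ultimately show ?thesis unfolding from0 from1 by simp
    qed
  qed
qed

lemma map_nat_diff_upto:
  "map (\<lambda>d. nat (int c - d)) [int c - int h .. int c - 1] = rev [1..<h + 1]"
proof (rule nth_equalityI)
  fix i assume "i < length (map (\<lambda>d. nat (int c - d)) [int c - int h .. int c - 1])"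
  then have "i < h" by simp
  then show "map (\<lambda>d. nat (int c - d)) [int c - int h .. int c - 1] ! i = rev [1..<h + 1] ! i"
    by (simp add: nth_upto rev_nth del: upt_Suc)
qed simp

lemma concat_diagonal_cells:
  assumes p: "is_partition lam" and c: "1 \<le> c" "c \<le> num_cols lam"
  shows "concat (map (diagonal_cell lam T c) (diagonals lam)) = column lam T c"
proof -
  define h where "h = col_len lam c"
  have "1 \<le> h" using in_shape_first_row[OF c] in_shape_iff_col_len[OF p, of 1 c] unfolding h_def by simp
  then have h: "1 \<le> h" "h \<le> length lam"
    using in_shape_iff_col_len[OF p, of h c] unfolding h_def in_shape_def by auto
  have cell: "diagonal_cell lam T c d =
      (if int c - int h \<le> d \<and> d \<le> int c - 1 then [T (nat (int c - d)) c] else [])" for d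
    unfolding diagonal_cell_def h_def using in_shape_iff_col_len[OF p, of "nat (int c - d)" c] by auto
  define lo where "lo = 1 - int (length lam)"
  define hi where "hi = int (num_cols lam) - 1"
  have "diagonals lam = [lo .. int c - int h - 1] @ [int c - int h .. hi]"
    unfolding diagonals_def lo_def hi_def
    using upto_split1[of lo "int c - int h" hi] h c unfolding lo_def hi_def by simp
  also have "[int c - int h .. hi] = [int c - int h .. int c - 1] @ [int c .. hi]"
    using upto_split2[of "int c - int h" "int c - 1" hi] h c unfolding hi_def by simp
  finally have split: "diagonals lam =
      [lo .. int c - int h - 1] @ [int c - int h .. int c - 1] @ [int c .. hi]" .
  have empty: "concat (map (diagonal_cell lam T c) [lo .. int c - int h - 1]) = []"
    "concat (map (diagonal_cell lam T c) [int c .. hi]) = []"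
    by (auto simp: cell)
  have cells: "map (diagonal_cell lam T c) [int c - int h .. int c - 1] =
      map (\<lambda>d. [T (nat (int c - d)) c]) [int c - int h .. int c - 1]"
    by (rule map_cong) (auto simp: cell)
  have "map (\<lambda>d. T (nat (int c - d)) c) [int c - int h .. int c - 1] = column lam T c"
    using arg_cong[OF map_nat_diff_upto[of c h], of "map (\<lambda>r. T r c)"]
    unfolding column_def h_def by (simp add: comp_def del: upt_Suc)
  then show ?thesis unfolding split map_append concat_append empty cells by simp
qed

section \<open>Adding one column to the diagonal word\<close>

lemma sorted_wrt_filter_guarded:
  "sorted_wrt (\<lambda>a b. Q a \<longrightarrow> Q b \<longrightarrow> R a b) xs \<Longrightarrow> sorted_wrt R (filter Q xs)"
  by (induction xs) auto

lemma column_decreasing: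
  assumes tab: "is_P_tableau lam T"
  shows "sorted_wrt (\<lambda>a b. b < a) (column lam T c)"
proof -
  have "sorted_wrt (\<lambda>x y. T x c < T y c) [1..<col_len lam c + 1]"
  proof (rule sorted_wrt_mono_rel[OF _ sorted_wrt_upt])
    fix x y assume "x \<in> set [1..<col_len lam c + 1]" "y \<in> set [1..<col_len lam c + 1]" "x < y"
    then show "T x c < T y c"
      using P_tableau_column_less[OF tab] in_shape_iff_col_len[OF P_tableau_partition[OF tab]] by auto
  qed
  then show ?thesis unfolding column_def by (simp add: sorted_wrt_map sorted_wrt_rev)
qed

lemma diagonal_from_no_descent:
  fixes T :: "nat \<Rightarrow> nat \<Rightarrow> 'a::order"
  assumes tab: "is_P_tableau lam T" and free: "three_plus_one_free TYPE('a)" and "1 \<le> c0"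
  shows "sorted_wrt (\<lambda>a b. \<not> b < a) (diagonal_from lam T c0 d)"
proof -
  define Q where "Q = (\<lambda>r. int r + d \<ge> int c0 \<and> in_shape lam r (nat (int r + d)))"
  have "sorted_wrt (\<lambda>a b. Q a \<longrightarrow> Q b \<longrightarrow> \<not> T b (nat (int b + d)) < T a (nat (int a + d)))
      [1..<length lam + 1]"
  proof (rule sorted_wrt_mono_rel[OF _ sorted_wrt_upt], intro impI)
    fix r r' assume "r \<in> set [1..<length lam + 1]" "r < r'" "Q r" "Q r'"
    define c where "c = nat (int r + d)"
    define c' where "c' = nat (int r' + d)"
    have c': "c' = c + (r' - r)" "1 \<le> c" "2 \<le> c'"
      using \<open>Q r\<close> \<open>r < r'\<close> \<open>1 \<le> c0\<close> unfolding c_def c'_def Q_def by auto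
    have cell': "in_shape lam r' c'" using \<open>Q r'\<close> unfolding c'_def Q_def by simp
    have "T r c < T r' (c' - 1)"
      using P_tableau_less_shifted[OF tab free in_shape_col_le[OF cell'], of "c' - 1" r c]
        \<open>r \<in> set [1..<length lam + 1]\<close> c' \<open>r < r'\<close> by auto
    moreover have "\<not> T r' c' < T r' (c' - 1)" using P_tableau_row_not_less[OF tab cell' c'(3)] .
    ultimately show "\<not> T r' (nat (int r' + d)) < T r (nat (int r + d))"
      unfolding c_def[symmetric] c'_def[symmetric] by (meson less_trans)
  qed
  then have "sorted_wrt (\<lambda>a b. \<not> T b (nat (int b + d)) < T a (nat (int a + d)))
      (filter Q [1..<length lam + 1])"
    by (rule sorted_wrt_filter_guarded)
  then show ?thesis unfolding diagonal_from_def Q_def[symmetric] by (simp add: sorted_wrt_map)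
qed

lemma diagonal_cell_nonempty:
  assumes "is_partition lam" "1 \<le> c0" "d < d'"
    and "diagonal_from lam T (Suc c0) d \<noteq> []" "diagonal_cell lam T c0 d' \<noteq> []"
  shows "diagonal_cell lam T c0 d \<noteq> []"
proof -
  from assms(4) obtain r where r: "int r + d \<ge> int (Suc c0)" "in_shape lam r (nat (int r + d))"
    unfolding diagonal_from_def by (auto simp: filter_empty_conv)
  have "1 \<le> int c0 - d'" using assms(5) unfolding diagonal_cell_def by (auto split: if_splits)
  then have "in_shape lam (nat (int c0 - d)) (nat (int r + d))"
    using in_shape_row_le[OF assms(1) r(2)] r(1) assms(3) by auto
  then have "in_shape lam (nat (int c0 - d)) c0"
    by (rule in_shape_col_le) (use assms(2) r in auto)
  then show ?thesis unfolding diagonal_cell_def using \<open>1 \<le> int c0 - d'\<close> assms(3) by auto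
qed

lemma diagonal_cell_less_diagonal_from:
  fixes T :: "nat \<Rightarrow> nat \<Rightarrow> 'a::order"
  assumes tab: "is_P_tableau lam T" and free: "three_plus_one_free TYPE('a)"
    and "1 \<le> c0" "d < d'"
    and x: "x \<in> set (diagonal_cell lam T c0 d')" and y: "y \<in> set (diagonal_from lam T (Suc c0) d)"
  shows "x < y"
proof -
  from y obtain r where r: "int r + d \<ge> int (Suc c0)" "in_shape lam r (nat (int r + d))"
    and "y = T r (nat (int r + d))"
    unfolding diagonal_from_def by auto
  moreover from x have "1 \<le> int c0 - d'" "x = T (nat (int c0 - d')) c0"
    unfolding diagonal_cell_def by (auto split: if_splits)
  ultimately show ?thesis
    using P_tableau_less_shifted[OF tab free r(2), of "nat (int c0 - d')" c0] \<open>1 \<le> c0\<close> \<open>d < d'\<close>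
    by auto
qed

lemma column_diagword_from_Suc:
  fixes T :: "nat \<Rightarrow> nat \<Rightarrow> 'a::order"
  assumes tab: "is_P_tableau lam T" and free: "three_plus_one_free TYPE('a)"
    and c0: "1 \<le> c0" "c0 \<le> num_cols lam"
  shows "plac_cong (column lam T c0 @ diagword_from lam T (Suc c0)) (diagword_from lam T c0)"
proof -
  have p: "is_partition lam" using P_tableau_partition[OF tab] .
  have "plac_cong (concat (map (diagonal_cell lam T c0) (diagonals lam)) @
        concat (map (diagonal_from lam T (Suc c0)) (diagonals lam)))
      (concat (map (\<lambda>d. diagonal_cell lam T c0 d @ diagonal_from lam T (Suc c0) d) (diagonals lam)))"
  proof (rule plac_cong_interleave)
    show "sorted_wrt (<) (diagonals lam)" unfolding diagonals_def by simp
    show "sorted_wrt (\<lambda>a b. b < a) (concat (map (diagonal_cell lam T c0) (diagonals lam)))"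
      unfolding concat_diagonal_cells[OF p c0] by (rule column_decreasing[OF tab])
    show "\<forall>d\<in>set (diagonals lam). length (diagonal_cell lam T c0 d) \<le> 1"
      unfolding diagonal_cell_def by simp
    show "\<forall>d\<in>set (diagonals lam). sorted_wrt (\<lambda>a b. \<not> b < a)
        (diagonal_cell lam T c0 d @ diagonal_from lam T (Suc c0) d)"
      using diagonal_from_no_descent[OF tab free c0(1)] diagonal_from_Suc by metis
  qed (use diagonal_cell_nonempty[OF p c0(1)] diagonal_cell_less_diagonal_from[OF tab free c0(1)]
      in blast)+
  then show ?thesis
    unfolding concat_diagonal_cells[OF p c0] diagword_from_def diagonal_from_Suc[symmetric] .
qed

lemma colword_from_plac_cong_diagword_from:
  fixes T :: "nat \<Rightarrow> nat \<Rightarrow> 'a::order"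
  assumes tab: "is_P_tableau lam T" and free: "three_plus_one_free TYPE('a)"
    and "1 \<le> c0" "c0 \<le> num_cols lam + 1"
  shows "plac_cong (colword_from lam T c0) (diagword_from lam T c0)"
  using assms(3,4)
proof (induction "num_cols lam + 1 - c0" arbitrary: c0)
  case 0
  then have "c0 = Suc (num_cols lam)" by simp
  then show ?case
    using colword_from_beyond diagword_from_beyond[OF P_tableau_partition[OF tab]] plac_cong_refl
    by metis
next
  case (Suc n)
  then have c0: "1 \<le> c0" "c0 \<le> num_cols lam" by auto
  have "plac_cong (column lam T c0 @ colword_from lam T (Suc c0))
      (column lam T c0 @ diagword_from lam T (Suc c0))"
    using Suc by (intro plac_cong_append_left Suc.hyps) auto
  then show ?case
    unfolding colword_from_Suc[OF c0]
    using plac_cong_trans column_diagword_from_Suc[OF tab free c0] by blast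
qed

theorem mainTheorem17:
  fixes lam :: "nat list" and T :: "nat \<Rightarrow> nat \<Rightarrow> 'a::{order, finite}"
  assumes "three_plus_one_free TYPE('a)"
    and "is_P_tableau lam T"
  shows "plac_cong (colword lam T) (diagword lam T)"
  unfolding colword_eq_colword_from diagword_eq_diagword_from
  using colword_from_plac_cong_diagword_from[OF assms(2,1)] by simp

end
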